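(* There exists a constant $c_0>0$ such that for all $n,r,t\in\mathbb{N}$ and $\varepsilon\in(0,1)$ with $r<\frac{\varepsilon^2 n}{c_0 t}$, there is a 1-sided error, nonadaptive, $t$-online-erasure-resilient $\varepsilon$-tester for sortedness of $n$-element real sequences $f:[n]\to\mathbb{R}$ with at most $r$ distinct values, which makes $O(\sqrt r/\varepsilon)$ queries, each chosen uniformly and independently from $[n]$.
   Context: Online-erasure model. An input is a function $f:D\to R$ on a finite domain $D$. An algorithm accesses $f$ only through an oracle $\mathcal{O}$ by querying points $x\in D$ one at a time and receiving $\mathcal{O}(x)$. Initially $\mathcal{O}(x)=f(x)$ for all $x\in D$. For $t\in\mathbb{N}$, a $t$-online-erasure oracle, after answering each query, may choose up to $t$ points $x\in D$ and set $\mathcal{O}(x)=\perp$ (a special "erased" symbol); these values are used to answer all future queries. The choice of erasures (the adversarial strategy) may depend on $f$, on the queries and answers so far, and on the algorithm's code, but not on the algorithm's future random coins; the algorithm does not know where erasures are. A property $\mathcal{P}$ is a set of functions; $f$ is $\varepsilon$-far from $\mathcal{P}$ if for every $g\in\mathcal{P}$, $f$ and $g$ differ on at least an $\varepsilon$ fraction of $D$. A $t$-online-erasure-resilient $\varepsilon$-tester for $\mathcal{P}$ is a randomized algorithm that, given $t,\varepsilon$ and access to $f$ via a $t$-online-erasure oracle, for every adversarial strategy accepts with probability at least $2/3$ if $f\in\mathcal{P}$ and rejects with probability at least $2/3$ if $f$ is $\varepsilon$-far from $\mathcal{P}$. It has 1-sided error if it accepts every $f\in\mathcal{P}$ with probability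 1; it is nonadaptive if its queries do not depend on answers to previous queries. A sequence $f:[n]\to\mathbb{R}$ is sorted if $f(x)\le f(y)$ for all $x<y$; here the tester is promised that $f$ takes at most $r$ distinct values, and "$\varepsilon$-far" is with respect to the set of sorted sequences. *)

theory Defs
  imports "HOL-Probability.Probability"
begin

text \<open>Sequences f : [n] -> R are modelled as functions nat => real; only the
values on {1..n} matter.\<close>

definition sorted_seq :: "nat \<Rightarrow> (nat \<Rightarrow> real) \<Rightarrow> bool" where
  "sorted_seq n f \<longleftrightarrow> (\<forall>x\<in>{1..n}. \<forall>y\<in>{1..n}. x < y \<longrightarrow> f x \<le> f y)"

definition seq_dist :: "nat \<Rightarrow> (nat \<Rightarrow> real) \<Rightarrow> (nat \<Rightarrow> real) \<Rightarrow> real" where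
  "seq_dist n f g = real (card {x\<in>{1..n}. f x \<noteq> g x}) / real n"

definition far_from_sorted :: "nat \<Rightarrow> real \<Rightarrow> (nat \<Rightarrow> real) \<Rightarrow> bool" where
  "far_from_sorted n \<epsilon> f \<longleftrightarrow> (\<forall>g. sorted_seq n g \<longrightarrow> seq_dist n f g \<ge> \<epsilon>)"

text \<open>A (deterministic) adversarial strategy: after answering the query whose
history of queries so far is h (h includes the current query), it erases the
set of points adv h. Answers are determined by f, the queries and past erasures,
so depending on the query history (and implicitly on f and the algorithm,
which are fixed before the adversary is chosen) is fully general.\<close>

type_synonym adversary = "nat list \<Rightarrow> nat set"

definition valid_adversary :: "nat \<Rightarrow> adversary \<Rightarrow> bool" where
  "valid_adversary t adv \<longleftrightarrow> (\<forall>h. finite (adv h) \<and> card (adv h) \<le> t)"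

text \<open>Points erased before the i-th query (0-based): the union of the erasures
made after queries 0, ..., i-1.\<close>

definition erased_before :: "adversary \<Rightarrow> nat list \<Rightarrow> nat \<Rightarrow> nat set" where
  "erased_before adv qs i = (\<Union>j<i. adv (take (Suc j) qs))"

text \<open>Oracle answers; None stands for the erased symbol.\<close>

definition oracle_answers :: "(nat \<Rightarrow> real) \<Rightarrow> adversary \<Rightarrow> nat list \<Rightarrow> real option list" where
  "oracle_answers f adv qs =
     map (\<lambda>i. if qs ! i \<in> erased_before adv qs i then None else Some (f (qs ! i)))
         [0..<length qs]"

fun uniform_queries :: "nat \<Rightarrow> nat \<Rightarrow> nat list pmf" where
  "uniform_queries n 0 = return_pmf []"
| "uniform_queries n (Suc k) =
     bind_pmf (pmf_of_set {1..n}) (\<lambda>x. map_pmf (\<lambda>xs. x # xs) (uniform_queries n k))"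

text \<open>A nonadaptive tester with uniform queries: it makes k uniform independent
queries and then decides (possibly randomly; True = accept) from the queries
and answers via dec.\<close>

definition accept_prob ::
  "nat \<Rightarrow> nat \<Rightarrow> (nat list \<Rightarrow> real option list \<Rightarrow> bool pmf) \<Rightarrow> (nat \<Rightarrow> real) \<Rightarrow> adversary \<Rightarrow> real" where
  "accept_prob n k dec f adv =
     measure_pmf.prob (bind_pmf (uniform_queries n k) (\<lambda>qs. dec qs (oracle_answers f adv qs))) {True}"

definition oe_sortedness_tester ::
  "nat \<Rightarrow> nat \<Rightarrow> nat \<Rightarrow> real \<Rightarrow> nat \<Rightarrow> (nat list \<Rightarrow> real option list \<Rightarrow> bool pmf) \<Rightarrow> bool" where
  "oe_sortedness_tester n r t \<epsilon> k dec \<longleftrightarrow>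
     (\<forall>f adv. card (f ` {1..n}) \<le> r \<longrightarrow> valid_adversary t adv \<longrightarrow>
        (sorted_seq n f \<longrightarrow> accept_prob n k dec f adv = 1) \<and>
        (far_from_sorted n \<epsilon> f \<longrightarrow> 1 - accept_prob n k dec f adv \<ge> 2/3))"

end

theory Submission
  imports Defs
begin

text \<open>The tester makes 2s = O(sqrt r / \<epsilon>) uniform queries and rejects iff two non-erased answers
  witness a violation, so sorted inputs are always accepted. After i queries at most i t points
  are erased, so some query meets an erased point with probability at most (2s)^2 t / n, which the
  hypothesis on r t makes small. If f is \<epsilon>-far from sorted, a maximal matching of violated pairs
  has at least \<epsilon> n / 2 pairs; grouping them by the value a at the left endpoint and splitting
  each group at its median yields disjoint sets L a, R a, each of about half the group size, with
  every pair in L a \<times> R a violated. A second-moment argument shows that the first s queries hit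
  sets L a of large total weight, and the last s queries then hit one of the corresponding R a
  with probability at least 4/5.\<close>

section \<open>Averages over uniform query sequences\<close>

fun unif_avg :: "nat \<Rightarrow> nat \<Rightarrow> (nat list \<Rightarrow> real) \<Rightarrow> real" where
  "unif_avg n 0 g = g []"
| "unif_avg n (Suc k) g = (\<Sum>x\<in>{1..n}. unif_avg n k (\<lambda>q. g (x # q))) / real n"

lemma set_pmf_uniform_queries:
  "n \<ge> 1 \<Longrightarrow> set_pmf (uniform_queries n k) \<subseteq> {q. set q \<subseteq> {1..n} \<and> length q = k}"
  by (induction k) force+

lemma finite_set_pmf_uniform_queries: "n \<ge> 1 \<Longrightarrow> finite (set_pmf (uniform_queries n k))"
  by (rule finite_subset[OF set_pmf_uniform_queries]) (auto intro: finite_lists_length_eq)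

lemma expectation_uniform_queries:
  assumes "n \<ge> 1"
  shows "measure_pmf.expectation (uniform_queries n k) g = unif_avg n k g"
proof (induction k arbitrary: g)
  case 0 then show ?case by simp
next
  case (Suc k)
  have "measure_pmf.expectation (uniform_queries n (Suc k)) g =
    (\<Sum>x\<in>{1..n}. measure_pmf.expectation (map_pmf ((#) x) (uniform_queries n k)) g) / real n"
    using assms by (simp only: uniform_queries.simps, subst pmf_expectation_bind_pmf_of_set)
      (auto simp: finite_set_pmf_uniform_queries sum_distrib_left divide_inverse mult.commute)
  then show ?case by (simp add: Suc.IH)
qed

lemma prob_uniform_queries:
  "n \<ge> 1 \<Longrightarrow> measure_pmf.prob (uniform_queries n k) {q. P q} = unif_avg n k (\<lambda>q. of_bool (P q))"
proof -
  assume "n \<ge> 1"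
  have "measure_pmf.prob (uniform_queries n k) {q. P q}
      = measure_pmf.expectation (uniform_queries n k) (indicator {q. P q})"
    by simp
  also have "indicator {q. P q} = (\<lambda>q. of_bool (P q) :: real)" by (auto simp: fun_eq_iff)
  finally show ?thesis using expectation_uniform_queries[OF \<open>n \<ge> 1\<close>] by simp
qed

lemma unif_avg_add: "unif_avg n k (\<lambda>q. g q + h q) = unif_avg n k g + unif_avg n k h"
  by (induction k arbitrary: g h) (simp_all add: sum.distrib add_divide_distrib)

lemma unif_avg_cmult: "unif_avg n k (\<lambda>q. c * g q) = c * unif_avg n k g"
  by (induction k arbitrary: g) (simp_all add: sum_distrib_left)

lemma unif_avg_diff: "unif_avg n k (\<lambda>q. g q - h q) = unif_avg n k g - unif_avg n k h"
  using unif_avg_add[of n k g "\<lambda>q. - h q"] unif_avg_cmult[of n k "-1" h] by simp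

lemma unif_avg_sum: "unif_avg n k (\<lambda>q. \<Sum>i\<in>I. g i q) = (\<Sum>i\<in>I. unif_avg n k (g i))"
  by (induction k arbitrary: g) (simp_all add: sum_divide_distrib flip: sum.swap[of _ I])

lemma unif_avg_const: "n \<ge> 1 \<Longrightarrow> unif_avg n k (\<lambda>_. c) = c"
  by (induction k) simp_all

lemma unif_avg_mono:
  assumes "n \<ge> 1" and "\<And>q. set q \<subseteq> {1..n} \<Longrightarrow> length q = k \<Longrightarrow> g q \<le> h q"
  shows "unif_avg n k g \<le> unif_avg n k h"
  using assms(2)
proof (induction k arbitrary: g h)
  case 0 then show ?case by simp
next
  case (Suc k)
  have "(\<Sum>x\<in>{1..n}. unif_avg n k (\<lambda>q. g (x # q))) \<le> (\<Sum>x\<in>{1..n}. unif_avg n k (\<lambda>q. h (x # q)))"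
    by (intro sum_mono Suc.IH) (use Suc.prems in auto)
  then show ?case by (simp add: divide_right_mono)
qed

lemma unif_avg_append: "unif_avg n (a + b) g = unif_avg n a (\<lambda>q. unif_avg n b (\<lambda>q'. g (q @ q')))"
  by (induction a arbitrary: g) simp_all

lemma unif_avg_avoids:
  assumes "n \<ge> 1" "A \<subseteq> {1..n}"
  shows "unif_avg n k (\<lambda>q. of_bool (set q \<inter> A = {})) = (1 - real (card A) / real n) ^ k"
proof (induction k)
  case 0 then show ?case by simp
next
  case (Suc k)
  have "(\<Sum>x\<in>{1..n}. unif_avg n k (\<lambda>q. of_bool (set (x # q) \<inter> A = {})))
      = real (card ({1..n} - A)) * (1 - real (card A) / real n) ^ k"
  proof -
    have "unif_avg n k (\<lambda>q. of_bool (set (x # q) \<inter> A = {}))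
        = of_bool (x \<notin> A) * (1 - real (card A) / real n) ^ k" for x
      using Suc.IH by (cases "x \<in> A") (simp_all add: unif_avg_const[OF assms(1)])
    then show ?thesis by (simp add: sum_distrib_right[symmetric] of_bool_def sum.If_cases Diff_eq Compl_eq)
  qed
  also have "real (card ({1..n} - A)) = real n - real (card A)"
    using assms card_mono[of "{1..n}" A] by (simp add: card_Diff_subset finite_subset)
  finally show ?case using assms(1) by (simp add: field_simps)
qed

lemma unif_avg_hits:
  "n \<ge> 1 \<Longrightarrow> A \<subseteq> {1..n} \<Longrightarrow>
    unif_avg n k (\<lambda>q. of_bool (set q \<inter> A \<noteq> {})) = 1 - (1 - real (card A) / real n) ^ k"
  using unif_avg_diff[of n k "\<lambda>_. 1" "\<lambda>q. of_bool (set q \<inter> A = {})"]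
  by (simp add: unif_avg_const unif_avg_avoids of_bool_not_iff)

lemma unif_avg_hits_both_le:
  assumes n: "n \<ge> 1" and "A \<subseteq> {1..n}" "B \<subseteq> {1..n}" "A \<inter> B = {}"
  shows "unif_avg n k (\<lambda>q. of_bool (set q \<inter> A \<noteq> {}) * of_bool (set q \<inter> B \<noteq> {}))
    \<le> unif_avg n k (\<lambda>q. of_bool (set q \<inter> A \<noteq> {})) * unif_avg n k (\<lambda>q. of_bool (set q \<inter> B \<noteq> {}))"
proof -
  let ?a = "real (card A) / real n" and ?b = "real (card B) / real n"
  have "finite A" "finite B" using assms finite_subset[OF _ finite_atLeastAtMost] by auto
  then have card_Un: "real (card (A \<union> B)) / real n = ?a + ?b"
    using assms by (simp add: card_Un_disjoint add_divide_distrib)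
  have "card (A \<union> B) \<le> n" using card_mono[of "{1..n}" "A \<union> B"] assms by auto
  then have "real (card (A \<union> B)) / real n \<le> 1" using n by simp
  then have "0 \<le> 1 - ?a - ?b" using card_Un by linarith
  moreover have "1 - ?a - ?b \<le> (1 - ?a) * (1 - ?b)" by (simp add: algebra_simps)
  ultimately have miss_Un: "(1 - ?a - ?b) ^ k \<le> ((1 - ?a) * (1 - ?b)) ^ k"
    by (simp add: power_mono)
  have "(\<lambda>q. of_bool (set q \<inter> A \<noteq> {}) * of_bool (set q \<inter> B \<noteq> {})) =
      (\<lambda>q. 1 - of_bool (set q \<inter> A = {}) - of_bool (set q \<inter> B = {}) + of_bool (set q \<inter> (A \<union> B) = {}) :: real)"
    by (auto simp: fun_eq_iff)
  then have "unif_avg n k (\<lambda>q. of_bool (set q \<inter> A \<noteq> {}) * of_bool (set q \<inter> B \<noteq> {}))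
      = 1 - (1 - ?a) ^ k - (1 - ?b) ^ k + (1 - ?a - ?b) ^ k"
    using assms card_Un by (simp add: unif_avg_add unif_avg_diff unif_avg_const unif_avg_avoids diff_diff_eq)
  also have "\<dots> \<le> (1 - (1 - ?a) ^ k) * (1 - (1 - ?b) ^ k)"
    using miss_Un[unfolded power_mult_distrib] by (simp add: algebra_simps)
  finally show ?thesis using assms by (simp add: unif_avg_hits)
qed

section \<open>Erasures\<close>

definition hits_erasure :: "adversary \<Rightarrow> nat list \<Rightarrow> nat list \<Rightarrow> bool" where
  "hits_erasure adv h q \<longleftrightarrow>
    (\<exists>i<length q. (h @ q) ! (length h + i) \<in> erased_before adv (h @ q) (length h + i))"

lemma erased_before_append: "erased_before adv (h @ q) (length h) = erased_before adv h (length h)"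
  unfolding erased_before_def by (rule SUP_cong) auto

lemma card_erased_before:
  assumes "valid_adversary t adv"
  shows "finite (erased_before adv h i)" "card (erased_before adv h i) \<le> i * t"
proof -
  show "finite (erased_before adv h i)"
    using assms unfolding erased_before_def valid_adversary_def by auto
  have "card (erased_before adv h i) \<le> (\<Sum>j<i. card (adv (take (Suc j) h)))"
    unfolding erased_before_def by (rule card_UN_le) simp
  also have "\<dots> \<le> (\<Sum>j<i. t)"
    using assms by (intro sum_mono) (auto simp: valid_adversary_def)
  finally show "card (erased_before adv h i) \<le> i * t" by simp
qed

lemma hits_erasure_Cons:
  "hits_erasure adv h (x # q) \<longleftrightarrow>
    x \<in> erased_before adv h (length h) \<or> hits_erasure adv (h @ [x]) q"
proof -
  have "hits_erasure adv h (x # q) \<longleftrightarrow>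
      (h @ x # q) ! length h \<in> erased_before adv (h @ x # q) (length h) \<or>
      (\<exists>i<length q. (h @ x # q) ! (length h + Suc i) \<in> erased_before adv (h @ x # q) (length h + Suc i))"
    unfolding hits_erasure_def by (simp only: length_Cons Ex_less_Suc2 add_0_right add_Suc_right)
  then show ?thesis
    using erased_before_append[of adv h "x # q"] by (simp add: hits_erasure_def nth_append)
qed

lemma unif_avg_hits_erasure_le:
  assumes adv: "valid_adversary t adv" and n: "n \<ge> 1"
  shows "unif_avg n k (\<lambda>q. of_bool (hits_erasure adv h q)) \<le> (\<Sum>i<k. real ((length h + i) * t)) / real n"
proof (induction k arbitrary: h)
  case 0 then show ?case by (simp add: hits_erasure_def)
next
  case (Suc k)
  let ?E = "erased_before adv h (length h)"
  let ?B = "(\<Sum>i<k. real ((length h + Suc i) * t)) / real n"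
  have "unif_avg n k (\<lambda>q. of_bool (hits_erasure adv h (x # q))) \<le> of_bool (x \<in> ?E) + ?B" for x
  proof -
    have "unif_avg n k (\<lambda>q. of_bool (hits_erasure adv h (x # q)))
        \<le> unif_avg n k (\<lambda>q. of_bool (x \<in> ?E) + of_bool (hits_erasure adv (h @ [x]) q))"
      by (rule unif_avg_mono[OF n]) (auto simp: hits_erasure_Cons)
    also have "\<dots> \<le> of_bool (x \<in> ?E) + ?B"
      using Suc.IH[of "h @ [x]"] by (simp add: unif_avg_add unif_avg_const[OF n])
    finally show ?thesis .
  qed
  then have "(\<Sum>x\<in>{1..n}. unif_avg n k (\<lambda>q. of_bool (hits_erasure adv h (x # q))))
      \<le> real (card ({1..n} \<inter> ?E)) + real n * ?B"
    by (rule sum_mono[THEN order_trans]) (simp add: sum.distrib of_bool_def sum.If_cases)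
  also have "card ({1..n} \<inter> ?E) \<le> length h * t"
    using card_mono[of ?E "{1..n} \<inter> ?E"] card_erased_before[OF adv, of h "length h"] by auto
  also have "real (length h * t) + real n * ?B = (\<Sum>i<Suc k. real ((length h + i) * t))"
    using n by (simp add: sum.lessThan_Suc_shift algebra_simps del: sum.lessThan_Suc)
  finally show ?case using n by (simp add: divide_right_mono)
qed

section \<open>A second-moment bound for weighted hits\<close>

lemma power_one_minus_le_inverse:
  fixes z :: real
  assumes "0 \<le> z" "z \<le> 1"
  shows "(1 - z) ^ s \<le> 1 / (1 + real s * z)"
proof -
  have "(1 - z) ^ s * (1 + real s * z) \<le> (1 - z) ^ s * (1 + z) ^ s"
    using assms by (intro mult_left_mono Bernoulli_inequality) auto
  also have "\<dots> = (1 - z * z) ^ s" by (simp add: power_mult_distrib[symmetric] algebra_simps)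
  also have "\<dots> \<le> 1" using assms by (intro power_le_one) (auto intro: mult_le_one)
  finally show ?thesis using assms by (simp add: pos_le_divide_eq add_pos_nonneg)
qed

lemma miss_prob_le_inverse:
  assumes "0 \<le> w" "w \<le> real m" "m \<le> n"
  shows "(1 - real m / real n) ^ s \<le> 1 / (1 + real s * w / real n)"
proof (cases "n = 0")
  case False
  then have "(1 - real m / real n) ^ s \<le> (1 - w / real n) ^ s"
    using assms by (intro power_mono) (auto simp: field_simps)
  also have "\<dots> \<le> 1 / (1 + real s * (w / real n))"
    using assms False by (intro power_one_minus_le_inverse) (auto simp: field_simps)
  finally show ?thesis by simp
qed (use assms in auto)

lemma hit_variance_le:
  fixes w :: real and m n s :: nat
  assumes "0 \<le> w" "w \<le> real m" "m \<le> n"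
  defines "P \<equiv> 1 - (1 - real m / real n) ^ s"
  shows "real s / real n * (w * w * (P - P * P)) \<le> w * P"
proof -
  have "0 \<le> 1 - real m / real n" "1 - real m / real n \<le> 1"
    using assms by (auto simp: divide_le_eq_1)
  then have P: "0 \<le> P" unfolding P_def by (simp add: power_le_one)
  define x where "x = real s * w / real n"
  have x: "0 \<le> x" using assms unfolding x_def by simp
  have miss: "1 - P \<le> 1 / (1 + x)"
    using miss_prob_le_inverse[OF assms(1-3)] unfolding P_def x_def by simp
  have "x * (1 - P) \<le> x / (1 + x)" using mult_left_mono[OF miss x] by simp
  also have "\<dots> \<le> 1" using x by (simp add: divide_le_eq_1)
  finally have "x * (1 - P) * (w * P) \<le> 1 * (w * P)"
    using assms P by (intro mult_right_mono) auto
  then show ?thesis unfolding x_def by (simp add: algebra_simps diff_divide_distrib)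
qed

lemma inverse_one_plus_le_quadratic:
  fixes y \<mu> :: real
  assumes "0 \<le> y" "0 \<le> \<mu>"
  shows "1 / (1 + y) \<le> 1 / (1 + \<mu>) + (\<mu> - y) / (1 + \<mu>)^2 + (\<mu> - y)^2 / (1 + \<mu>)^2"
proof -
  have "1 / (1 + y) = 1 / (1 + \<mu>) + (\<mu> - y) / (1 + \<mu>)^2 + (\<mu> - y)^2 / ((1 + \<mu>)^2 * (1 + y))"
    using assms by (simp add: divide_simps power2_eq_square) (simp add: algebra_simps)
  also have "(\<mu> - y)^2 / ((1 + \<mu>)^2 * (1 + y)) \<le> (\<mu> - y)^2 / (1 + \<mu>)^2"
    using assms by (intro divide_left_mono) (auto simp: add_pos_nonneg)
  finally show ?thesis by simp
qed

lemma unif_avg_inverse_one_plus_le: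
  assumes n: "n \<ge> 1" and Y: "\<And>q. 0 \<le> Y q" and mean: "unif_avg n k Y = \<mu>"
    and second: "unif_avg n k (\<lambda>q. Y q * Y q) \<le> \<mu> * \<mu> + \<mu>"
  shows "unif_avg n k (\<lambda>q. 1 / (1 + Y q)) \<le> 2 / (1 + \<mu>)"
proof -
  have \<mu>: "0 \<le> \<mu>"
    using unif_avg_mono[OF n, of k "\<lambda>_. 0" Y] Y mean by (simp add: unif_avg_const[OF n])
  define D where "D = 1 / (1 + \<mu>)^2"
  define a where "a = 1 / (1 + \<mu>) + \<mu> * D + \<mu> * \<mu> * D"
  have "1 / (1 + Y q) \<le> a + (- D - 2 * \<mu> * D) * Y q + D * (Y q * Y q)" for q
    using inverse_one_plus_le_quadratic[OF Y[of q] \<mu>] unfolding D_def a_def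
    by (simp add: power2_eq_square algebra_simps add_divide_distrib diff_divide_distrib)
  then have "unif_avg n k (\<lambda>q. 1 / (1 + Y q))
      \<le> unif_avg n k (\<lambda>q. a + (- D - 2 * \<mu> * D) * Y q + D * (Y q * Y q))"
    by (intro unif_avg_mono[OF n])
  also have "\<dots> = a + (- D - 2 * \<mu> * D) * \<mu> + D * unif_avg n k (\<lambda>q. Y q * Y q)"
    by (simp add: unif_avg_add unif_avg_cmult unif_avg_const[OF n] mean)
  also have "\<dots> \<le> a + (- D - 2 * \<mu> * D) * \<mu> + D * (\<mu> * \<mu> + \<mu>)"
    using second by (intro add_left_mono mult_left_mono) (auto simp: D_def)
  also have "\<dots> = 1 / (1 + \<mu>) + \<mu> / (1 + \<mu>) * (1 / (1 + \<mu>))"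
    by (simp add: a_def D_def power2_eq_square algebra_simps add_divide_distrib)
  also have "\<dots> \<le> 2 / (1 + \<mu>)"
    using \<mu> mult_right_mono[of "\<mu> / (1 + \<mu>)" 1 "1 / (1 + \<mu>)"] by simp
  finally show ?thesis .
qed

lemma unif_avg_weighted_hits:
  assumes "n \<ge> 1" "\<And>a. a \<in> V \<Longrightarrow> L a \<subseteq> {1..n}"
  shows "unif_avg n k (\<lambda>q. c * (\<Sum>a\<in>V. w a * of_bool (set q \<inter> L a \<noteq> {})))
    = c * (\<Sum>a\<in>V. w a * (1 - (1 - real (card (L a)) / real n) ^ k))"
  using assms by (simp add: unif_avg_cmult unif_avg_sum unif_avg_hits)

lemma unif_avg_hits_pair_le:
  fixes L :: "'a \<Rightarrow> nat set" and u v :: real and s :: nat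
  assumes n: "n \<ge> 1" and L: "\<And>a. a \<in> V \<Longrightarrow> L a \<subseteq> {1..n}"
    and disj: "\<And>a b. a \<in> V \<Longrightarrow> b \<in> V \<Longrightarrow> a \<noteq> b \<Longrightarrow> L a \<inter> L b = {}"
    and ab: "a \<in> V" "b \<in> V" and uv: "0 \<le> u" "0 \<le> v"
  defines "P \<equiv> \<lambda>a. 1 - (1 - real (card (L a)) / real n) ^ s"
  shows "u * v * unif_avg n s (\<lambda>q. of_bool (set q \<inter> L a \<noteq> {}) * of_bool (set q \<inter> L b \<noteq> {}))
    \<le> u * P a * (v * P b) + (if a = b then u * v * (P a - P a * P a) else 0)"
proof (cases "a = b")
  case True
  have "(\<lambda>q. of_bool (set q \<inter> L b \<noteq> {}) * of_bool (set q \<inter> L b \<noteq> {}) :: real)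
      = (\<lambda>q. of_bool (set q \<inter> L b \<noteq> {}))" by (simp add: fun_eq_iff)
  moreover have "unif_avg n s (\<lambda>q. of_bool (set q \<inter> L b \<noteq> {})) = P b"
    using unif_avg_hits[OF n L[OF ab(2)], of s] unfolding P_def by simp
  ultimately show ?thesis unfolding True by (simp add: algebra_simps)
next
  case False
  then have "unif_avg n s (\<lambda>q. of_bool (set q \<inter> L a \<noteq> {}) * of_bool (set q \<inter> L b \<noteq> {})) \<le> P a * P b"
    using unif_avg_hits_both_le[OF n L[OF ab(1)] L[OF ab(2)] disj[OF ab False]]
    unfolding P_def by (simp add: unif_avg_hits[OF n L[OF ab(1)]] unif_avg_hits[OF n L[OF ab(2)]])
  then show ?thesis using False uv by (simp add: mult_left_mono algebra_simps)
qed

text \<open>Hits of disjoint sets are negatively correlated, so only the diagonal terms of the variance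
  count; each is at most its mean because L a is missed with probability at most 1/(1 + s w a / n).\<close>

lemma unif_avg_weighted_hits_square_le:
  fixes L :: "'a \<Rightarrow> nat set" and w :: "'a \<Rightarrow> real" and s :: nat
  assumes n: "n \<ge> 1" and V: "finite V" and L: "\<And>a. a \<in> V \<Longrightarrow> L a \<subseteq> {1..n}"
    and disj: "\<And>a b. a \<in> V \<Longrightarrow> b \<in> V \<Longrightarrow> a \<noteq> b \<Longrightarrow> L a \<inter> L b = {}"
    and w: "\<And>a. a \<in> V \<Longrightarrow> 0 \<le> w a \<and> w a \<le> real (card (L a))"
  defines "Y \<equiv> \<lambda>q. real s / real n * (\<Sum>a\<in>V. w a * of_bool (set q \<inter> L a \<noteq> {}))"
  shows "unif_avg n s (\<lambda>q. Y q * Y q) \<le> unif_avg n s Y * unif_avg n s Y + unif_avg n s Y"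
proof -
  define c where "c = real s / real n"
  define H where "H a q = (of_bool (set q \<inter> L a \<noteq> {}) :: real)" for a q
  define P where "P a = 1 - (1 - real (card (L a)) / real n) ^ s" for a
  have c: "0 \<le> c" unfolding c_def by simp
  have card_L: "card (L a) \<le> n" if "a \<in> V" for a using card_mono[OF _ L[OF that]] by simp
  have EH: "unif_avg n s (H a) = P a" if "a \<in> V" for a
    using unif_avg_hits[OF n L[OF that]] unfolding H_def P_def by simp
  have EY: "unif_avg n s Y = c * (\<Sum>a\<in>V. w a * P a)"
    unfolding Y_def c_def P_def by (rule unif_avg_weighted_hits[OF n L])
  have pair: "w a * w b * unif_avg n s (\<lambda>q. H a q * H b q)
      \<le> w a * P a * (w b * P b) + (if a = b then w a * w b * (P a - P a * P a) else 0)"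
    if "a \<in> V" "b \<in> V" for a b
    using unif_avg_hits_pair_le[where L = L and a = a and b = b and u = "w a" and v = "w b" and s = s,
        OF n L disj that] w that
    unfolding H_def P_def by simp
  have "Y q * Y q = c * c * (\<Sum>a\<in>V. \<Sum>b\<in>V. w a * w b * (H a q * H b q))" for q
    unfolding Y_def c_def H_def by (simp add: sum_product algebra_simps)
  then have "unif_avg n s (\<lambda>q. Y q * Y q)
      = c * c * (\<Sum>a\<in>V. \<Sum>b\<in>V. w a * w b * unif_avg n s (\<lambda>q. H a q * H b q))"
    by (simp add: unif_avg_cmult unif_avg_sum)
  also have "\<dots> \<le> c * c * (\<Sum>a\<in>V. \<Sum>b\<in>V. w a * P a * (w b * P b)
      + (if a = b then w a * w b * (P a - P a * P a) else 0))"
    using c pair by (intro mult_left_mono sum_mono) auto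
  also have "\<dots> = c * c * ((\<Sum>a\<in>V. w a * P a) * (\<Sum>a\<in>V. w a * P a)
      + (\<Sum>a\<in>V. w a * w a * (P a - P a * P a)))"
    using V by (simp add: sum.distrib sum_product sum.delta')
  also have "\<dots> = (c * (\<Sum>a\<in>V. w a * P a)) * (c * (\<Sum>a\<in>V. w a * P a))
      + c * (\<Sum>a\<in>V. c * (w a * w a * (P a - P a * P a)))"
    by (simp add: sum_distrib_left algebra_simps)
  also have "\<dots> \<le> (c * (\<Sum>a\<in>V. w a * P a)) * (c * (\<Sum>a\<in>V. w a * P a)) + c * (\<Sum>a\<in>V. w a * P a)"
    using c w card_L unfolding c_def P_def by (intro add_left_mono mult_left_mono sum_mono hit_variance_le) auto
  finally show ?thesis using EY by simp
qed

lemma Cauchy_Schwarz_one_plus: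
  fixes x :: "'a \<Rightarrow> real"
  assumes "\<And>a. a \<in> V \<Longrightarrow> 0 \<le> x a"
  shows "(\<Sum>a\<in>V. x a)^2 \<le> (\<Sum>a\<in>V. x a^2 / (1 + x a)) * (real (card V) + (\<Sum>a\<in>V. x a))"
proof -
  have pos: "0 < 1 + x a" if "a \<in> V" for a using assms[OF that] by simp
  have "(\<Sum>a\<in>V. x a / sqrt (1 + x a) * sqrt (1 + x a))^2
      \<le> (\<Sum>a\<in>V. (x a / sqrt (1 + x a))^2) * (\<Sum>a\<in>V. (sqrt (1 + x a))^2)"
    by (rule Cauchy_Schwarz_ineq_sum)
  moreover have "x a / sqrt (1 + x a) * sqrt (1 + x a) = x a" if "a \<in> V" for a
    using pos[OF that] by simp
  moreover have "(x a / sqrt (1 + x a))^2 = x a^2 / (1 + x a)" if "a \<in> V" for a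
    using pos[OF that] by (simp add: power_divide)
  moreover have "(sqrt (1 + x a))^2 = 1 + x a" if "a \<in> V" for a
    using pos[OF that] by simp
  ultimately show ?thesis by (simp add: sum.distrib)
qed

lemma nine_times_add_le_square:
  fixes X v r :: real
  assumes "1 \<le> r" "12 * sqrt r \<le> X" "0 \<le> v" "v \<le> r"
  shows "9 * (v + X) \<le> X^2"
proof -
  define y where "y = sqrt r"
  have y: "1 \<le> y" "r = y^2" "12 * y \<le> X" using assms unfolding y_def by auto
  have "X^2 - 9 * X - 9 * r = (X - 12 * y) * (X + 12 * y - 9) + y * (135 * y - 108)"
    using y(2) by (simp add: power2_eq_square algebra_simps)
  also have "\<dots> \<ge> 0"
    using y by (intro add_nonneg_nonneg mult_nonneg_nonneg) auto
  finally have "9 * X + 9 * r \<le> X^2" by simp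
  then show ?thesis using assms(4) by simp
qed

lemma weighted_hit_prob_ge:
  assumes "0 \<le> w" "w \<le> real m" "m \<le> n"
  shows "(real s * w / real n)^2 / (1 + real s * w / real n)
    \<le> real s / real n * (w * (1 - (1 - real m / real n) ^ s))"
proof -
  define x where "x = real s * w / real n"
  have "0 \<le> x" using assms unfolding x_def by simp
  have "(1 - real m / real n) ^ s \<le> 1 / (1 + x)" using miss_prob_le_inverse[OF assms] unfolding x_def .
  then have "x * (x / (1 + x)) \<le> x * (1 - (1 - real m / real n) ^ s)"
    using \<open>0 \<le> x\<close> by (intro mult_left_mono) (auto simp: field_simps)
  then show ?thesis by (simp add: x_def power2_eq_square)
qed

text \<open>Each term is at least x^2/(1 + x) for x = s w/n, and by Cauchy-Schwarz the sum of these
  is at least 9 as soon as the sum of the x is at least 12 sqrt r.\<close>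

lemma weighted_hit_mass_ge:
  fixes L :: "'a \<Rightarrow> nat set" and w :: "'a \<Rightarrow> real"
  assumes n: "n \<ge> 1" and V: "finite V" "card V \<le> r" and r: "1 \<le> r"
    and L: "\<And>a. a \<in> V \<Longrightarrow> L a \<subseteq> {1..n}"
    and w: "\<And>a. a \<in> V \<Longrightarrow> 0 \<le> w a \<and> w a \<le> real (card (L a))"
    and mass: "\<epsilon> * real n \<le> 4 * (\<Sum>a\<in>V. w a)" and \<epsilon>: "0 < \<epsilon>"
    and s: "48 * sqrt (real r) / \<epsilon> \<le> real s"
  shows "9 \<le> real s / real n * (\<Sum>a\<in>V. w a * (1 - (1 - real (card (L a)) / real n) ^ s))"
proof -
  define x where "x a = real s * w a / real n" for a
  define X where "X = (\<Sum>a\<in>V. x a)"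
  have x_nonneg: "0 \<le> x a" if "a \<in> V" for a using w[OF that] unfolding x_def by simp
  have each: "x a^2 / (1 + x a) \<le> real s / real n * (w a * (1 - (1 - real (card (L a)) / real n) ^ s))"
    if "a \<in> V" for a
    using weighted_hit_prob_ge[of "w a" "card (L a)" n s] w[OF that] L[OF that]
      card_mono[of "{1..n}" "L a"] unfolding x_def by auto
  have X_eq: "X = real s / real n * (\<Sum>a\<in>V. w a)" unfolding X_def x_def by (simp add: sum_distrib_left)
  have "real s * \<epsilon> = real s / real n * (\<epsilon> * real n)" using n by simp
  also have "\<dots> \<le> real s / real n * (4 * (\<Sum>a\<in>V. w a))" using mass by (intro mult_left_mono) auto
  also have "\<dots> = 4 * X" unfolding X_eq by (simp add: algebra_simps)
  finally have "real s * \<epsilon> \<le> 4 * X" .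
  moreover have "48 * sqrt (real r) \<le> real s * \<epsilon>" using s \<epsilon> by (simp add: field_simps)
  ultimately have X: "12 * sqrt (real r) \<le> X" by linarith
  have "9 * (real (card V) + X) \<le> X^2"
    using nine_times_add_le_square[of "real r" X "real (card V)"] X r V by simp
  also have "\<dots> \<le> (\<Sum>a\<in>V. x a^2 / (1 + x a)) * (real (card V) + X)"
    unfolding X_def by (rule Cauchy_Schwarz_one_plus) (rule x_nonneg)
  finally have "9 * (real (card V) + X) \<le> (\<Sum>a\<in>V. x a^2 / (1 + x a)) * (real (card V) + X)" .
  moreover have "0 < real (card V) + X"
  proof -
    have "1 \<le> sqrt (real r)" using r by simp
    then show ?thesis using X by linarith
  qed
  ultimately have "9 \<le> (\<Sum>a\<in>V. x a^2 / (1 + x a))" by (rule mult_right_le_imp_le)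
  also have "\<dots> \<le> real s / real n * (\<Sum>a\<in>V. w a * (1 - (1 - real (card (L a)) / real n) ^ s))"
    unfolding sum_distrib_left by (intro sum_mono each)
  finally show ?thesis .
qed

section \<open>Matchings of violated pairs\<close>

definition violates :: "(nat \<Rightarrow> real) \<Rightarrow> nat \<Rightarrow> nat \<Rightarrow> bool" where
  "violates f x y \<longleftrightarrow> x < y \<and> f y < f x"

definition violations :: "nat \<Rightarrow> (nat \<Rightarrow> real) \<Rightarrow> (nat \<times> nat) set" where
  "violations n f = {(x, y). x \<in> {1..n} \<and> y \<in> {1..n} \<and> violates f x y}"

definition matching :: "(nat \<times> nat) set \<Rightarrow> bool" where
  "matching P \<longleftrightarrow> pairwise (\<lambda>p q. {fst p, snd p} \<inter> {fst q, snd q} = {}) P"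

lemma finite_violations: "finite (violations n f)"
  by (rule finite_subset[of _ "{1..n} \<times> {1..n}"]) (auto simp: violations_def)

lemma matching_inj_on:
  assumes "matching P"
  shows "inj_on fst P" "inj_on snd P"
  using assms unfolding matching_def pairwise_def inj_on_def by blast+

lemma sorted_extension:
  assumes mono: "\<And>x y. x \<in> K \<Longrightarrow> y \<in> K \<Longrightarrow> x < y \<Longrightarrow> f x \<le> f y" and K: "finite K"
  shows "\<exists>g. sorted_seq n g \<and> (\<forall>z\<in>K. g z = f z)"
proof (cases "K = {}")
  case True
  then show ?thesis by (auto simp: sorted_seq_def)
next
  case False
  define g where "g z = Max (insert (Min (f ` K)) (f ` {u\<in>K. u \<le> z}))" for z
  have "g x \<le> g y" if "x < y" for x y
    unfolding g_def using that K by (intro Max_mono) auto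
  then have "sorted_seq n g" by (simp add: sorted_seq_def)
  moreover have "g z = f z" if z: "z \<in> K" for z
    unfolding g_def
  proof (rule Max_eqI)
    fix v assume "v \<in> insert (Min (f ` K)) (f ` {u\<in>K. u \<le> z})"
    then show "v \<le> f z"
    proof
      assume "v = Min (f ` K)"
      then show ?thesis using z K by simp
    next
      assume "v \<in> f ` {u\<in>K. u \<le> z}"
      then show ?thesis using z mono by (auto simp: le_less)
    qed
  qed (use z K in auto)
  ultimately show ?thesis by blast
qed

lemma maximal_violation_matching:
  obtains P where "P \<subseteq> violations n f" "matching P"
    "\<And>x y. x \<in> {1..n} - (fst ` P \<union> snd ` P) \<Longrightarrow> y \<in> {1..n} - (fst ` P \<union> snd ` P) \<Longrightarrow>
      x < y \<Longrightarrow> f x \<le> f y"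
proof -
  let ?M = "\<lambda>P. P \<subseteq> violations n f \<and> matching P"
  have "\<exists>P. ?M P \<and> (\<forall>Q. ?M Q \<longrightarrow> card Q \<le> card P)"
  proof (rule ex_has_greatest_nat[of ?M "{}" card "Suc (card (violations n f))"])
    show "?M {}" by (simp add: matching_def)
    show "\<forall>Q. ?M Q \<longrightarrow> card Q < Suc (card (violations n f))"
      using card_mono[OF finite_violations] by (simp add: le_imp_less_Suc)
  qed
  then obtain P where P: "?M P" and max: "\<And>Q. ?M Q \<Longrightarrow> card Q \<le> card P" by blast
  have sorted_off: "f x \<le> f y"
    if "x \<in> {1..n} - (fst ` P \<union> snd ` P)" "y \<in> {1..n} - (fst ` P \<union> snd ` P)" "x < y" for x y
  proof (rule ccontr)
    assume "\<not> f x \<le> f y"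
    then have "?M (insert (x, y) P)"
      using P that by (auto simp: violations_def violates_def matching_def pairwise_insert image_iff)
    moreover have "(x, y) \<notin> P" using that(1) by force
    moreover have "finite P" using P finite_subset finite_violations by blast
    ultimately show False using max[of "insert (x, y) P"] by simp
  qed
  show ?thesis using P sorted_off by (intro that[of P]) auto
qed

lemma far_imp_large_violation_matching:
  assumes n: "n \<ge> 1" and far: "far_from_sorted n \<epsilon> f"
  shows "\<exists>P \<subseteq> violations n f. matching P \<and> \<epsilon> * real n \<le> 2 * real (card P)"
proof -
  obtain P where P: "P \<subseteq> violations n f" "matching P"
    and sorted_off: "\<And>x y. x \<in> {1..n} - (fst ` P \<union> snd ` P) \<Longrightarrow> y \<in> {1..n} - (fst ` P \<union> snd ` P) \<Longrightarrow>
      x < y \<Longrightarrow> f x \<le> f y"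
    using maximal_violation_matching[of n f] by blast
  define E where "E = fst ` P \<union> snd ` P"
  have "finite P" using P finite_subset finite_violations by blast
  obtain g where g: "sorted_seq n g" "\<forall>z\<in>{1..n} - E. g z = f z"
    using sorted_extension[of "{1..n} - E" f n] sorted_off unfolding E_def by auto
  have "\<epsilon> \<le> seq_dist n f g" using far g(1) unfolding far_from_sorted_def by blast
  also have "\<dots> \<le> real (card E) / real n"
  proof -
    have "{x\<in>{1..n}. f x \<noteq> g x} \<subseteq> E" using g(2) by force
    then have "card {x\<in>{1..n}. f x \<noteq> g x} \<le> card E"
      using \<open>finite P\<close> unfolding E_def by (intro card_mono) auto
    then show ?thesis unfolding seq_dist_def by (simp add: divide_right_mono)
  qed
  also have "card E \<le> 2 * card P"
    using card_Un_le[of "fst ` P" "snd ` P"] card_image_le[OF \<open>finite P\<close>, of fst]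
      card_image_le[OF \<open>finite P\<close>, of snd] unfolding E_def by linarith
  finally show ?thesis using P n by (auto simp: field_simps)
qed

lemma card_eq_sum_card_fibres:
  assumes "finite A" "finite V" "g ` A \<subseteq> V"
  shows "card A = (\<Sum>a\<in>V. card {x\<in>A. g x = a})"
proof -
  have "A = (\<Union>a\<in>V. {x\<in>A. g x = a})" using assms(3) by auto
  moreover have "card (\<Union>a\<in>V. {x\<in>A. g x = a}) = (\<Sum>a\<in>V. card {x\<in>A. g x = a})"
    using assms(1,2) by (intro card_UN_disjoint) auto
  ultimately show ?thesis by simp
qed

lemma exists_median:
  fixes X :: "nat set"
  assumes "finite X"
  shows "\<exists>\<theta>. card X \<le> 2 * card {x\<in>X. x \<le> \<theta>} \<and> card X \<le> 2 * card {x\<in>X. \<theta> \<le> x}"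
proof -
  let ?low = "\<lambda>\<theta>. card X \<le> 2 * card {x\<in>X. x \<le> \<theta>}"
  define \<theta> where "\<theta> = (LEAST \<theta>. ?low \<theta>)"
  have "{x\<in>X. x \<le> Max (insert 0 X)} = X" using assms by auto
  then have "?low (Max (insert 0 X))" by simp
  then have low: "?low \<theta>" unfolding \<theta>_def by (rule LeastI)
  have "card X \<le> 2 * card {x\<in>X. \<theta> \<le> x}"
  proof (cases "\<theta> = 0")
    case False
    then have "\<not> ?low (\<theta> - 1)" using not_less_Least[of "\<theta> - 1" ?low] by (simp add: \<theta>_def[symmetric])
    moreover have "X = {x\<in>X. x \<le> \<theta> - 1} \<union> {x\<in>X. \<theta> \<le> x}" using False by auto
    then have "card X \<le> card {x\<in>X. x \<le> \<theta> - 1} + card {x\<in>X. \<theta> \<le> x}"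
      by (metis card_Un_le)
    ultimately show ?thesis by linarith
  qed simp
  then show ?thesis using low by blast
qed

lemma median_split:
  assumes Q: "Q \<subseteq> violations n f" "matching Q" and a: "\<And>p. p \<in> Q \<Longrightarrow> f (fst p) = a"
  shows "\<exists>L R. L \<subseteq> fst ` Q \<and> R \<subseteq> snd ` Q \<and> card Q \<le> 2 * card L \<and> card Q \<le> 2 * card R
    \<and> (\<forall>x\<in>L. \<forall>y\<in>R. violates f x y)"
proof -
  have fin: "finite Q" using Q finite_subset finite_violations by blast
  note inj = matching_inj_on[OF Q(2)]
  obtain \<theta> where \<theta>: "card (fst ` Q) \<le> 2 * card {x\<in>fst ` Q. x \<le> \<theta>}"
      "card (fst ` Q) \<le> 2 * card {x\<in>fst ` Q. \<theta> \<le> x}"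
    using exists_median[of "fst ` Q"] fin by blast
  define L where "L = {x\<in>fst ` Q. x \<le> \<theta>}"
  define R where "R = snd ` {p\<in>Q. \<theta> \<le> fst p}"
  have "card R = card {p\<in>Q. \<theta> \<le> fst p}"
    unfolding R_def by (rule card_image) (rule inj_on_subset[OF inj(2)], auto)
  also have "\<dots> = card (fst ` {p\<in>Q. \<theta> \<le> fst p})"
    by (rule card_image[symmetric]) (rule inj_on_subset[OF inj(1)], auto)
  also have "fst ` {p\<in>Q. \<theta> \<le> fst p} = {x\<in>fst ` Q. \<theta> \<le> x}" by auto
  finally have card_R: "card R = card {x\<in>fst ` Q. \<theta> \<le> x}" .
  have "card (fst ` Q) = card Q" by (rule card_image[OF inj(1)])
  moreover have "violates f x y" if xy: "x \<in> L" "y \<in> R" for x y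
  proof -
    obtain p q where "p \<in> Q" "x = fst p" "fst p \<le> \<theta>" "q \<in> Q" "\<theta> \<le> fst q" "y = snd q"
      using xy unfolding L_def R_def by blast
    moreover have "violates f (fst q) (snd q)" using \<open>q \<in> Q\<close> Q(1) by (auto simp: violations_def)
    ultimately show ?thesis using a by (auto simp: violates_def)
  qed
  ultimately show ?thesis using \<theta> card_R by (intro exI[of _ L] exI[of _ R]) (auto simp: L_def R_def)
qed

text \<open>Group a large matching by the value at the left endpoints and split each group at its
  median.\<close>

lemma violation_classes:
  assumes n: "n \<ge> 1" and far: "far_from_sorted n \<epsilon> f"
  obtains L R where "\<And>a. a \<in> f ` {1..n} \<Longrightarrow> L a \<subseteq> {1..n} \<and> R a \<subseteq> {1..n}"
    "\<And>a b. a \<in> f ` {1..n} \<Longrightarrow> b \<in> f ` {1..n} \<Longrightarrow> a \<noteq> b \<Longrightarrow> L a \<inter> L b = {} \<and> R a \<inter> R b = {}"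
    "\<And>a x y. a \<in> f ` {1..n} \<Longrightarrow> x \<in> L a \<Longrightarrow> y \<in> R a \<Longrightarrow> violates f x y"
    "\<epsilon> * real n \<le> 4 * (\<Sum>a\<in>f ` {1..n}. real (min (card (L a)) (card (R a))))"
proof -
  obtain P where P: "P \<subseteq> violations n f" "matching P" and large: "\<epsilon> * real n \<le> 2 * real (card P)"
    using far_imp_large_violation_matching[OF n far] by blast
  define V where "V = f ` {1..n}"
  define Pa where "Pa a = {p\<in>P. f (fst p) = a}" for a
  have Pa: "Pa a \<subseteq> violations n f" "matching (Pa a)" for a
    using P unfolding Pa_def matching_def by (auto intro: pairwise_subset)
  have "\<exists>La Ra. La \<subseteq> fst ` Pa a \<and> Ra \<subseteq> snd ` Pa a \<and> card (Pa a) \<le> 2 * card La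
      \<and> card (Pa a) \<le> 2 * card Ra \<and> (\<forall>x\<in>La. \<forall>y\<in>Ra. violates f x y)" for a
    by (rule median_split[OF Pa]) (simp add: Pa_def)
  then obtain L R where LR: "\<And>a. L a \<subseteq> fst ` Pa a \<and> R a \<subseteq> snd ` Pa a \<and> card (Pa a) \<le> 2 * card (L a)
      \<and> card (Pa a) \<le> 2 * card (R a) \<and> (\<forall>x\<in>L a. \<forall>y\<in>R a. violates f x y)"
    by metis
  have sub: "L a \<subseteq> {1..n} \<and> R a \<subseteq> {1..n}" for a
    using LR[of a] Pa(1)[of a] by (force simp: violations_def)
  have disj: "L a \<inter> L b = {} \<and> R a \<inter> R b = {}" if "a \<noteq> b" for a b
  proof
    have "Pa a \<inter> Pa b = {}" "Pa a \<subseteq> P" "Pa b \<subseteq> P" using that unfolding Pa_def by auto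
    then have "fst ` Pa a \<inter> fst ` Pa b = {}" "snd ` Pa a \<inter> snd ` Pa b = {}"
      by (simp_all flip: inj_on_image_Int[OF matching_inj_on(1)[OF P(2)]]
          inj_on_image_Int[OF matching_inj_on(2)[OF P(2)]])
    then show "L a \<inter> L b = {}" "R a \<inter> R b = {}" using LR[of a] LR[of b] by blast+
  qed
  have "card P = (\<Sum>a\<in>V. card (Pa a))"
    unfolding Pa_def using P(1) finite_subset[OF P(1) finite_violations]
    by (intro card_eq_sum_card_fibres) (auto simp: V_def violations_def)
  also have "\<dots> \<le> (\<Sum>a\<in>V. 2 * min (card (L a)) (card (R a)))"
    using LR by (intro sum_mono) (simp add: min_def)
  also have "\<dots> = 2 * (\<Sum>a\<in>V. min (card (L a)) (card (R a)))" by (simp add: sum_distrib_left)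
  finally have "real (card P) \<le> 2 * (\<Sum>a\<in>V. real (min (card (L a)) (card (R a))))"
    unfolding of_nat_sum[symmetric] by linarith
  with large have "\<epsilon> * real n \<le> 4 * (\<Sum>a\<in>V. real (min (card (L a)) (card (R a))))" by simp
  with sub disj LR show ?thesis unfolding V_def by (intro that[of L R]) blast+
qed

section \<open>The tester\<close>

definition detects :: "(nat \<Rightarrow> real) \<Rightarrow> nat list \<Rightarrow> bool" where
  "detects f q \<longleftrightarrow> (\<exists>x\<in>set q. \<exists>y\<in>set q. violates f x y)"

text \<open>Once the first half q of the queries has hit the sets L a, the second half detects a
  violation as soon as it hits the union B of the corresponding sets R a.\<close>

lemma unif_avg_not_detects_append_le:
  fixes L R :: "'a \<Rightarrow> nat set" and w :: "'a \<Rightarrow> real"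
  assumes n: "n \<ge> 1" and V: "finite V" and R: "\<And>a. a \<in> V \<Longrightarrow> R a \<subseteq> {1..n}"
    and disj: "\<And>a b. a \<in> V \<Longrightarrow> b \<in> V \<Longrightarrow> a \<noteq> b \<Longrightarrow> R a \<inter> R b = {}"
    and viol: "\<And>a x y. a \<in> V \<Longrightarrow> x \<in> L a \<Longrightarrow> y \<in> R a \<Longrightarrow> violates f x y"
    and w: "\<And>a. a \<in> V \<Longrightarrow> 0 \<le> w a \<and> w a \<le> real (card (R a))"
  shows "unif_avg n s (\<lambda>q'. of_bool (\<not> detects f (q @ q')))
    \<le> 1 / (1 + real s / real n * (\<Sum>a\<in>V. w a * of_bool (set q \<inter> L a \<noteq> {})))"
proof -
  define H where "H = {a\<in>V. set q \<inter> L a \<noteq> {}}"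
  define B where "B = (\<Union>a\<in>H. R a)"
  have B: "B \<subseteq> {1..n}" using R unfolding B_def H_def by auto
  have "set q' \<inter> B = {}" if "\<not> detects f (q @ q')" for q'
    using that viol unfolding detects_def B_def H_def by fastforce
  then have "unif_avg n s (\<lambda>q'. of_bool (\<not> detects f (q @ q'))) \<le> unif_avg n s (\<lambda>q'. of_bool (set q' \<inter> B = {}))"
    by (intro unif_avg_mono[OF n]) simp
  also have "\<dots> = (1 - real (card B) / real n) ^ s" by (rule unif_avg_avoids[OF n B])
  also have "\<dots> \<le> 1 / (1 + real s * (\<Sum>a\<in>V. w a * of_bool (set q \<inter> L a \<noteq> {})) / real n)"
  proof (rule miss_prob_le_inverse)
    have "(\<Sum>a\<in>V. w a * of_bool (set q \<inter> L a \<noteq> {})) = (\<Sum>a\<in>V. if set q \<inter> L a \<noteq> {} then w a else 0)"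
      by (intro sum.cong) auto
    also have "\<dots> = (\<Sum>a\<in>H. w a)" unfolding H_def by (rule sum.inter_filter[OF V, symmetric])
    also have "\<dots> \<le> (\<Sum>a\<in>H. real (card (R a)))" using w by (intro sum_mono) (auto simp: H_def)
    also have "\<dots> = real (card B)"
    proof -
      have "finite (R a)" if "a \<in> V" for a using R[OF that] finite_subset by blast
      then show ?thesis unfolding B_def using V disj by (subst card_UN_disjoint) (auto simp: H_def)
    qed
    finally show "(\<Sum>a\<in>V. w a * of_bool (set q \<inter> L a \<noteq> {})) \<le> real (card B)" .
    show "0 \<le> (\<Sum>a\<in>V. w a * of_bool (set q \<inter> L a \<noteq> {}))" using w by (intro sum_nonneg) auto
    show "card B \<le> n" using card_mono[OF _ B] by simp
  qed
  finally show ?thesis by simp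
qed

text \<open>The first half of the queries hits sets L a of large total weight with probability close
  to 1 by the second-moment bound; then the previous lemma applies to the second half.\<close>

lemma unif_avg_not_detects_le:
  assumes n: "n \<ge> 1" and far: "far_from_sorted n \<epsilon> f" and r: "card (f ` {1..n}) \<le> r"
    and \<epsilon>: "0 < \<epsilon>" and s: "48 * sqrt (real r) / \<epsilon> \<le> real s"
  shows "unif_avg n (s + s) (\<lambda>q. of_bool (\<not> detects f q)) \<le> 1 / 5"
proof -
  define V where "V = f ` {1..n}"
  obtain L R where sub: "\<And>a. a \<in> V \<Longrightarrow> L a \<subseteq> {1..n} \<and> R a \<subseteq> {1..n}"
    and disj: "\<And>a b. a \<in> V \<Longrightarrow> b \<in> V \<Longrightarrow> a \<noteq> b \<Longrightarrow> L a \<inter> L b = {} \<and> R a \<inter> R b = {}"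
    and viol: "\<And>a x y. a \<in> V \<Longrightarrow> x \<in> L a \<Longrightarrow> y \<in> R a \<Longrightarrow> violates f x y"
    and mass: "\<epsilon> * real n \<le> 4 * (\<Sum>a\<in>V. real (min (card (L a)) (card (R a))))"
    using violation_classes[OF n far] unfolding V_def by blast
  define w where "w a = real (min (card (L a)) (card (R a)))" for a
  define Y where "Y q = real s / real n * (\<Sum>a\<in>V. w a * of_bool (set q \<inter> L a \<noteq> {}))" for q
  define \<mu> where "\<mu> = real s / real n * (\<Sum>a\<in>V. w a * (1 - (1 - real (card (L a)) / real n) ^ s))"
  have V: "finite V" "card V \<le> r" using r unfolding V_def by auto
  have "V \<noteq> {}" using n unfolding V_def by auto
  then have "1 \<le> r" using V card_gt_0_iff[of V] by linarith
  have w: "0 \<le> w a \<and> w a \<le> real (card (L a))" "w a \<le> real (card (R a))" for a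
    unfolding w_def by auto
  have "unif_avg n (s + s) (\<lambda>q. of_bool (\<not> detects f q))
      = unif_avg n s (\<lambda>q. unif_avg n s (\<lambda>q'. of_bool (\<not> detects f (q @ q'))))"
    by (rule unif_avg_append)
  also have "\<dots> \<le> unif_avg n s (\<lambda>q. 1 / (1 + Y q))"
    unfolding Y_def using sub disj viol w
    by (intro unif_avg_mono[OF n] unif_avg_not_detects_append_le[OF n V(1), where L = L and R = R]) auto
  also have "\<dots> \<le> 2 / (1 + \<mu>)"
  proof (rule unif_avg_inverse_one_plus_le[OF n])
    show "0 \<le> Y q" for q unfolding Y_def by (intro mult_nonneg_nonneg sum_nonneg) (auto simp: w_def)
    show mean: "unif_avg n s Y = \<mu>"
      unfolding Y_def \<mu>_def using sub by (intro unif_avg_weighted_hits[OF n]) auto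
    show "unif_avg n s (\<lambda>q. Y q * Y q) \<le> \<mu> * \<mu> + \<mu>"
      unfolding mean[symmetric] Y_def using sub disj w
      by (intro unif_avg_weighted_hits_square_le[OF n V(1)]) auto
  qed
  also have "\<dots> \<le> 1 / 5"
  proof -
    have "9 \<le> \<mu>" unfolding \<mu>_def
      using sub w mass \<epsilon> s \<open>1 \<le> r\<close> by (intro weighted_hit_mass_ge[OF n V]) (auto simp: w_def)
    then show ?thesis by (simp add: field_simps)
  qed
  finally show ?thesis .
qed

definition sortedness_accepts :: "nat list \<Rightarrow> real option list \<Rightarrow> bool" where
  "sortedness_accepts qs ans \<longleftrightarrow>
    \<not> (\<exists>i<length qs. \<exists>j<length qs. \<exists>u v. ans ! i = Some u \<and> ans ! j = Some v \<and> qs ! i < qs ! j \<and> v < u)"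

lemma accept_prob_sortedness_accepts:
  assumes "n \<ge> 1"
  shows "accept_prob n k (\<lambda>qs ans. return_pmf (sortedness_accepts qs ans)) f adv
    = unif_avg n k (\<lambda>q. of_bool (sortedness_accepts q (oracle_answers f adv q)))"
proof -
  have "bind_pmf (uniform_queries n k) (\<lambda>qs. return_pmf (sortedness_accepts qs (oracle_answers f adv qs)))
      = map_pmf (\<lambda>qs. sortedness_accepts qs (oracle_answers f adv qs)) (uniform_queries n k)"
    by (simp add: map_pmf_def)
  then show ?thesis
    unfolding accept_prob_def using prob_uniform_queries[OF assms] by (simp add: vimage_def)
qed

lemma nth_oracle_answers:
  "i < length qs \<Longrightarrow>
    oracle_answers f adv qs ! i = (if qs ! i \<in> erased_before adv qs i then None else Some (f (qs ! i)))"
  by (simp add: oracle_answers_def)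

lemma sorted_imp_sortedness_accepts:
  assumes "sorted_seq n f" "set q \<subseteq> {1..n}"
  shows "sortedness_accepts q (oracle_answers f adv q)"
  unfolding sortedness_accepts_def
proof clarify
  fix i j u v
  assume ij: "i < length q" "j < length q" and "oracle_answers f adv q ! i = Some u"
    "oracle_answers f adv q ! j = Some v" and "q ! i < q ! j" "v < u"
  moreover have "q ! i \<in> {1..n}" "q ! j \<in> {1..n}" using assms(2) ij nth_mem by blast+
  ultimately have "f (q ! i) \<le> f (q ! j)" "u = f (q ! i)" "v = f (q ! j)"
    using assms(1) unfolding sorted_seq_def by (auto simp: nth_oracle_answers split: if_splits)
  then show False using \<open>v < u\<close> by simp
qed

lemma sortedness_accepts_imp_erasure_or_undetected:
  assumes "sortedness_accepts q (oracle_answers f adv q)"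
  shows "hits_erasure adv [] q \<or> \<not> detects f q"
proof (rule ccontr)
  assume "\<not> (hits_erasure adv [] q \<or> \<not> detects f q)"
  then have unerased: "\<And>i. i < length q \<Longrightarrow> oracle_answers f adv q ! i = Some (f (q ! i))"
    and "detects f q"
    unfolding hits_erasure_def by (auto simp: nth_oracle_answers)
  then obtain i j where "i < length q" "j < length q" "violates f (q ! i) (q ! j)"
    unfolding detects_def by (auto simp: in_set_conv_nth)
  then show False using assms unerased by (auto simp: sortedness_accepts_def violates_def)
qed

lemma sortedness_tester:
  assumes n: "n \<ge> 1" and \<epsilon>: "0 < \<epsilon>" and s: "48 * sqrt (real r) / \<epsilon> \<le> real s"
    and t: "12 * real ((s + s) * (s + s) * t) \<le> real n"
  shows "oe_sortedness_tester n r t \<epsilon> (s + s) (\<lambda>qs ans. return_pmf (sortedness_accepts qs ans))"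
  unfolding oe_sortedness_tester_def accept_prob_sortedness_accepts[OF n]
proof (intro allI impI conjI)
  fix f :: "nat \<Rightarrow> real" and adv :: adversary
  assume r: "card (f ` {1..n}) \<le> r" and adv: "valid_adversary t adv"
  let ?acc = "\<lambda>q. of_bool (sortedness_accepts q (oracle_answers f adv q)) :: real"
  show "unif_avg n (s + s) ?acc = 1" if "sorted_seq n f"
    using unif_avg_mono[OF n, of "s + s" ?acc "\<lambda>_. 1"] unif_avg_mono[OF n, of "s + s" "\<lambda>_. 1" ?acc]
      sorted_imp_sortedness_accepts[OF that] by (simp add: unif_avg_const[OF n])
  show "2 / 3 \<le> 1 - unif_avg n (s + s) ?acc" if far: "far_from_sorted n \<epsilon> f"
  proof -
    have "unif_avg n (s + s) ?acc
        \<le> unif_avg n (s + s) (\<lambda>q. of_bool (hits_erasure adv [] q) + of_bool (\<not> detects f q))"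
      using sortedness_accepts_imp_erasure_or_undetected by (intro unif_avg_mono[OF n]) force
    also have "\<dots> \<le> (\<Sum>i<s + s. real (i * t)) / real n + 1 / 5"
      using unif_avg_hits_erasure_le[OF adv n, of "s + s" "[]"]
        unif_avg_not_detects_le[OF n far r \<epsilon> s] by (simp add: unif_avg_add)
    also have "(\<Sum>i<s + s. real (i * t)) \<le> (\<Sum>i<s + s. real ((s + s) * t))"
      by (intro sum_mono) (simp add: mult_right_mono)
    also have "\<dots> = real ((s + s) * (s + s) * t)" by (simp add: mult.assoc)
    finally have "unif_avg n (s + s) ?acc \<le> real ((s + s) * (s + s) * t) / real n + 1 / 5"
      using n by (simp add: divide_right_mono)
    also have "\<dots> \<le> 1 / 12 + 1 / 5" using t n by (simp add: field_simps)
    finally show ?thesis by simp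
  qed
qed

lemma double_nat_ceiling_le:
  fixes x :: real
  assumes "x = 0 \<or> 1 \<le> x"
  shows "real (nat \<lceil>48 * x\<rceil> + nat \<lceil>48 * x\<rceil>) \<le> 98 * x"
  using assms by (auto simp del: of_nat_add) linarith

text \<open>115248 = 12 * 98^2, which makes the erasure probability (2s)^2 t / n at most 1/12.\<close>

lemma sample_size_bounds:
  fixes \<epsilon> :: real and n r t :: nat
  assumes \<epsilon>: "0 < \<epsilon>" "\<epsilon> < 1" and rt: "real r * 115248 * real t \<le> \<epsilon>^2 * real n"
  defines "s \<equiv> nat \<lceil>48 * (sqrt (real r) / \<epsilon>)\<rceil>"
  shows "48 * sqrt (real r) / \<epsilon> \<le> real s" and k: "real (s + s) \<le> 98 * sqrt (real r) / \<epsilon>"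
    and "12 * real ((s + s) * (s + s) * t) \<le> real n"
proof -
  show "48 * sqrt (real r) / \<epsilon> \<le> real s" unfolding s_def by linarith
  have "sqrt (real r) / \<epsilon> = 0 \<or> 1 \<le> sqrt (real r) / \<epsilon>"
  proof (cases "r = 0")
    case False
    then have "1 \<le> sqrt (real r)" by simp
    then have "\<epsilon> \<le> sqrt (real r)" using \<epsilon> by linarith
    then show ?thesis using \<epsilon> by (simp add: le_divide_eq)
  qed simp
  then show k: "real (s + s) \<le> 98 * sqrt (real r) / \<epsilon>"
    unfolding s_def by (simp only: double_nat_ceiling_le times_divide_eq_right[symmetric])
  have "12 * real ((s + s) * (s + s) * t) = 12 * real (s + s)^2 * real t" by (simp add: power2_eq_square)
  also have "\<dots> \<le> 12 * (98 * sqrt (real r) / \<epsilon>)^2 * real t"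
    using k by (intro mult_right_mono mult_left_mono power_mono) auto
  also have "\<dots> = real r * 115248 * real t / \<epsilon>^2" by (simp add: power_divide power_mult_distrib)
  also have "\<dots> \<le> real n" using rt \<epsilon> by (simp add: field_simps)
  finally show "12 * real ((s + s) * (s + s) * t) \<le> real n" .
qed

theorem theorem1p6:
  shows "\<exists>c0::real>0. \<exists>C::real>0. \<forall>n r t::nat. \<forall>\<epsilon>::real.
     0 < \<epsilon> \<and> \<epsilon> < 1 \<and> real r * c0 * real t < \<epsilon>^2 * real n \<longrightarrow>
     (\<exists>k dec. real k \<le> C * sqrt (real r) / \<epsilon> \<and> oe_sortedness_tester n r t \<epsilon> k dec)"
proof (rule exI[of _ "115248::real"], intro conjI exI[of _ "98::real"] allI impI)
  fix n r t :: nat and \<epsilon> :: real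
  assume "0 < \<epsilon> \<and> \<epsilon> < 1 \<and> real r * 115248 * real t < \<epsilon>^2 * real n"
  then have \<epsilon>: "0 < \<epsilon>" "\<epsilon> < 1" and rt: "real r * 115248 * real t < \<epsilon>^2 * real n" by auto
  have "0 \<le> real r * 115248 * real t" by simp
  with rt have n: "n \<ge> 1" by (cases n) auto
  note bounds = sample_size_bounds[OF \<epsilon> less_imp_le[OF rt]]
  show "\<exists>k dec. real k \<le> 98 * sqrt (real r) / \<epsilon> \<and> oe_sortedness_tester n r t \<epsilon> k dec"
    using sortedness_tester[OF n \<epsilon>(1) bounds(1) bounds(3)] bounds(2) by blast
qed simp_all

end
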